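(* Let $G$ be a finite group of order $n$ and $\ell$ an integer. If the exponent of $G$ does not divide $\ell$, then $$\frac{|\{g\in G:g^\ell=1\}|}{n}\le 1-\frac1{\sqrt{2n}}.$$ *)

theory Defs
  imports "HOL-Analysis.Analysis" "HOL-Algebra.Algebra"
begin

definition group_exponent :: "('a, 'b) monoid_scheme \<Rightarrow> nat" where
  "group_exponent G = Lcm ((\<lambda>g. group.ord G g) ` carrier G)"

end

theory Submission
  imports Defs
begin

text \<open>Let \<open>N\<close> be the set of elements with \<open>g\<^sup>l \<noteq> 1\<close>; it contains some \<open>a\<close>, since the
  exponent does not divide \<open>l\<close>. As \<open>N\<close> is closed under conjugation, the conjugacy class of \<open>a\<close>
  has at most \<open>|N|\<close> elements. In the centralizer of \<open>a\<close> every \<open>x \<notin> N\<close> yields the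
  element \<open>x a\<close> of \<open>N\<close>, because \<open>(x a)\<^sup>l = x\<^sup>l a\<^sup>l = a\<^sup>l\<close>; so the centralizer has at most
  \<open>2 |N|\<close> elements. The orbit-stabilizer theorem now gives \<open>n \<le> 2 |N|\<^sup>2\<close>, that is
  \<open>|N| / n \<ge> 1 / \<surd>(2 n)\<close>.\<close>

context group
begin

lemma int_pow_eq_one_on_carrier_iff_group_exponent_dvd:
  "(\<forall>g\<in>carrier G. g [^] l = \<one>) \<longleftrightarrow> int (group_exponent G) dvd l"
proof
  assume "\<forall>g\<in>carrier G. g [^] l = \<one>"
  then have ord_dvd: "ord g dvd nat \<bar>l\<bar>" if "g \<in> carrier G" for g
    using that by (simp add: int_pow_eq_id)
  have "group_exponent G dvd nat \<bar>l\<bar>"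
    unfolding group_exponent_def by (rule Lcm_least) (use ord_dvd in blast)
  then show "int (group_exponent G) dvd l"
    by (simp add: dvd_nat_abs_iff)
next
  assume "int (group_exponent G) dvd l"
  moreover have "ord g dvd group_exponent G" if "g \<in> carrier G" for g
    unfolding group_exponent_def using that by (simp add: dvd_Lcm)
  ultimately show "\<forall>g\<in>carrier G. g [^] l = \<one>"
    by (meson dvd_trans int_dvd_int_iff int_pow_eq_id)
qed

definition conjugation :: "'a \<Rightarrow> 'a \<Rightarrow> 'a" where
  "conjugation g = (\<lambda>h \<in> carrier G. g \<otimes> h \<otimes> inv g)"

lemma group_action_conjugation: "group_action G (carrier G) conjugation"
  unfolding conjugation_def by (rule action_by_conjugation)

lemma conjugation_in_hom: "g \<in> carrier G \<Longrightarrow> conjugation g \<in> hom G G"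
  by (rule homI) (simp_all add: conjugation_def m_assoc inv_solve_left inv_solve_left')

lemma int_pow_conjugation:
  assumes "g \<in> carrier G" "a \<in> carrier G"
  shows "conjugation g a [^] (i::int) = conjugation g (a [^] i)"
  by (rule hom_int_pow[OF conjugation_in_hom assms(2) is_group is_group, symmetric]) (fact assms(1))

lemma conjugation_closed [simp]:
  "g \<in> carrier G \<Longrightarrow> a \<in> carrier G \<Longrightarrow> conjugation g a \<in> carrier G"
  by (simp add: conjugation_def)

lemma conjugation_int_pow_eq_one_iff:
  assumes "g \<in> carrier G" "a \<in> carrier G"
  shows "conjugation g a [^] (i::int) = \<one> \<longleftrightarrow> a [^] i = \<one>"
  using assms by (simp add: int_pow_conjugation) (simp add: conjugation_def inv_solve_right')

lemma stabilizer_conjugation: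
  assumes "a \<in> carrier G"
  shows "stabilizer G conjugation a = {x \<in> carrier G. x \<otimes> a = a \<otimes> x}"
  using assms by (auto simp: stabilizer_def conjugation_def inv_solve_right')

lemma card_orbit_conjugation_le_card_non_roots:
  assumes "finite (carrier G)" "a \<in> carrier G" "a [^] (l::int) \<noteq> \<one>"
  shows "card (orbit G conjugation a) \<le> card {g \<in> carrier G. g [^] l \<noteq> \<one>}"
  using assms by (intro card_mono) (auto simp: orbit_def conjugation_int_pow_eq_one_iff)

lemma card_centralizer_le_twice_card_non_roots:
  assumes fin: "finite (carrier G)" and a: "a \<in> carrier G" "a [^] (l::int) \<noteq> \<one>"
  shows "card {x \<in> carrier G. x \<otimes> a = a \<otimes> x} \<le> 2 * card {g \<in> carrier G. g [^] l \<noteq> \<one>}"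
proof -
  let ?C = "{x \<in> carrier G. x \<otimes> a = a \<otimes> x}" and ?N = "{g \<in> carrier G. g [^] l \<noteq> \<one>}"
  have "inj_on (\<lambda>x. x \<otimes> a) (?C - ?N)"
    using a by (auto intro: inj_onI)
  moreover have "(\<lambda>x. x \<otimes> a) ` (?C - ?N) \<subseteq> ?N"
    using a by (auto simp: int_pow_mult_distrib)
  ultimately have "card (?C - ?N) \<le> card ?N"
    using fin by (simp add: card_inj_on_le)
  moreover have "card (?C \<inter> ?N) \<le> card ?N"
    using fin by (intro card_mono) auto
  moreover have "card ?C = card (?C \<inter> ?N) + card (?C - ?N)"
    using fin by (intro card_Int_Diff) auto
  ultimately show ?thesis by linarith
qed

lemma order_le_twice_square_card_non_roots:
  assumes "finite (carrier G)" "a \<in> carrier G" "a [^] (l::int) \<noteq> \<one>"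
  shows "order G \<le> 2 * card {g \<in> carrier G. g [^] l \<noteq> \<one>} ^ 2"
proof -
  let ?N = "{g \<in> carrier G. g [^] l \<noteq> \<one>}"
  have "order G = card (orbit G conjugation a) * card (stabilizer G conjugation a)"
    using group_action.orbit_stabilizer_theorem[OF group_action_conjugation assms(2)] by simp
  also have "\<dots> \<le> card ?N * (2 * card ?N)"
    using assms card_orbit_conjugation_le_card_non_roots card_centralizer_le_twice_card_non_roots
    by (intro mult_le_mono) (simp_all add: stabilizer_conjugation)
  finally show ?thesis
    by (simp add: power2_eq_square)
qed

end

lemma le_twice_square_imp_inverse_sqrt_le:
  fixes m n :: real
  assumes "0 < n" "0 \<le> m" "n \<le> 2 * m\<^sup>2"
  shows "1 / sqrt (2 * n) \<le> m / n"
proof -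
  have "n\<^sup>2 \<le> n * (2 * m\<^sup>2)"
    using assms by (simp add: power2_eq_square mult_left_mono)
  also have "\<dots> = (m * sqrt (2 * n))\<^sup>2"
    using assms by (simp add: power_mult_distrib)
  finally have "n \<le> m * sqrt (2 * n)"
    by (rule power2_le_imp_le) (use assms in simp)
  then show ?thesis
    using assms by (simp add: divide_simps)
qed

theorem theorem2p9:
  fixes G (structure) and n :: nat and l :: int
  assumes "group G" and "finite (carrier G)" and "order G = n"
    and "\<not> int (group_exponent G) dvd l"
  shows "real (card {g \<in> carrier G. g [^]\<^bsub>G\<^esub> l = \<one>\<^bsub>G\<^esub>}) / real n
           \<le> 1 - 1 / sqrt (2 * real n)"
proof -
  interpret group G by fact
  let ?S = "{g \<in> carrier G. g [^] l = \<one>}" and ?N = "{g \<in> carrier G. g [^] l \<noteq> \<one>}"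
  obtain a where a: "a \<in> carrier G" "a [^] l \<noteq> \<one>"
    using assms(4) int_pow_eq_one_on_carrier_iff_group_exponent_dvd by blast
  have n_pos: "0 < n"
    using assms(2,3) a(1) by (auto simp: order_def card_gt_0_iff)
  have "card ?S + card ?N = card (?S \<union> ?N)"
    using assms(2) by (intro card_Un_disjoint[symmetric]) auto
  also have "?S \<union> ?N = carrier G"
    by blast
  finally have "card ?S + card ?N = n"
    using assms(3) by (simp add: order_def)
  then have "real (card ?S) / real n = 1 - real (card ?N) / real n"
    using n_pos by (simp add: field_simps)
  moreover have "1 / sqrt (2 * real n) \<le> real (card ?N) / real n"
    using order_le_twice_square_card_non_roots[OF assms(2) a] assms(3) n_pos
    by (intro le_twice_square_imp_inverse_sqrt_le) (simp_all flip: of_nat_power of_nat_mult)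
  ultimately show ?thesis
    by simp
qed

end
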